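(* There exist absolute constants $C,c>0$ such that for every integer $v\ge0$ and real $\lambda\ge\frac12$: \begin{enumerate} \item $c(v+\lambda)^{-1}\exp(\Psi_{v,\lambda}-\lambda)\le(-1)^vA_{v,\lambda}\le C(v+\lambda)\exp(\Psi_{v,\lambda}-\lambda)$ and $c(v+\lambda)^{-1}\exp(\Psi_{v,\lambda}+\lambda)\le B_{v,\lambda}\le C(v+\lambda)\exp(\Psi_{v,\lambda}+\lambda)$; \item if moreover $v\le\lambda$, then $c(v+\lambda)^{-1}\exp(\Psi_{v,\lambda}-\lambda)\le(-1)^vA_{v,\lambda}\le C\lambda^{-1/2}\exp(\Psi_{v,\lambda}-\lambda)$. \end{enumerate}
   Context: For integer $v\ge0$ and real $\lambda>0$ define $A_{v,\lambda}=2e^{-\lambda}(-1)^v\sum_{n\ge v,\ n-v\in2\mathbb{Z}}\frac{\lambda^n}{2^n n!}\binom{n}{(n-v)/2}$ and $B_{v,\lambda}=2e^{\lambda}\sum_{n\ge v,\ n-v\in2\mathbb{Z}}\frac{\lambda^n}{2^n n!}\binom{n}{(n-v)/2}$, and $\Psi_{v,\lambda}=\sqrt{v^2+\lambda^2}+v\log\Big(\frac{\sqrt{v^2+\lambda^2}-v}{\lambda}\Big)$ (natural logarithm). *)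

theory Defs
  imports "HOL-Analysis.Analysis"
begin

text \<open>The sum over n \<ge> v with n - v even is written via n = v + 2k, k = 0,1,2,...;
  then (n - v)/2 = k.\<close>

definition A_coef :: "nat \<Rightarrow> real \<Rightarrow> real" where
  "A_coef v lam = 2 * exp (- lam) * (-1) ^ v *
     (\<Sum>k. lam ^ (v + 2*k) / (2 ^ (v + 2*k) * fact (v + 2*k)) * real ((v + 2*k) choose k))"

definition B_coef :: "nat \<Rightarrow> real \<Rightarrow> real" where
  "B_coef v lam = 2 * exp lam *
     (\<Sum>k. lam ^ (v + 2*k) / (2 ^ (v + 2*k) * fact (v + 2*k)) * real ((v + 2*k) choose k))"

definition Psi :: "nat \<Rightarrow> real \<Rightarrow> real" where
  "Psi v lam = sqrt (real v ^ 2 + lam ^ 2)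
     + real v * ln ((sqrt (real v ^ 2 + lam ^ 2) - real v) / lam)"

end

theory Submission
  imports Defs
begin

(*
  The series in A_coef and B_coef is the modified Bessel function
  I_v(lam) = sum_k (lam/2)^(v+2k) / (k! (v+k)!).  With s = sqrt (v^2 + lam^2), a = (s + v)/2 and
  b = (s - v)/2 one has a b = (lam/2)^2, so the k-th term equals exp Psi times the product of the
  Poisson masses P_a(v+k) and P_b(k).  Since the P_b(k) sum to 1 and every Poisson mass P_a(m) is at
  most sqrt (2/a) <= 2/sqrt lam, the series is at most 2 exp Psi / sqrt lam.  Keeping only the term
  k = floor b, for which v + k = floor a, bounds it below by exp Psi exp (-4) / sqrt ((a+1)(b+1)).
  Both Poisson estimates come from elementary Stirling-type bounds on ln n!.
*)

lemma ln_one_plus_le_cubic: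
  fixes y :: real
  assumes "0 \<le> y"
  shows "ln (1 + y) \<le> y - y^2/2 + y^3/3"
proof -
  let ?f = "\<lambda>t::real. t - t^2/2 + t^3/3 - ln (1 + t)"
  have "?f 0 \<le> ?f y"
  proof (rule DERIV_nonneg_imp_increasing_open[OF assms])
    fix t :: real
    assume t: "0 < t" "t < y"
    have "DERIV ?f t :> t^3 / (1 + t)"
      using t by (auto intro!: derivative_eq_intros simp: field_simps power2_eq_square power3_eq_cube)
    then show "\<exists>d. DERIV ?f t :> d \<and> 0 \<le> d"
      using t by auto
  qed (intro continuous_intros, auto)
  then show ?thesis by simp
qed

lemma ln_one_plus_ge_pade:
  fixes y :: real
  assumes "0 \<le> y"
  shows "2*y / (2 + y) \<le> ln (1 + y)"
proof -
  let ?f = "\<lambda>t::real. ln (1 + t) - 2*t / (2 + t)"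
  have "?f 0 \<le> ?f y"
  proof (rule DERIV_nonneg_imp_increasing_open[OF assms])
    fix t :: real
    assume t: "0 < t" "t < y"
    have "DERIV ?f t :> 1/(1 + t) - 4/(2 + t)^2"
      using t by (auto intro!: derivative_eq_intros simp: field_simps power2_eq_square)
    moreover have "1/(1 + t) - 4/(2 + t)^2 = t^2 / ((1 + t) * (2 + t)^2)"
      using t by (simp add: divide_simps) (simp add: algebra_simps power2_eq_square)
    ultimately show "\<exists>d. DERIV ?f t :> d \<and> 0 \<le> d"
      using t by auto
  qed (intro continuous_intros, auto)
  then show ?thesis by simp
qed

lemma ln_one_plus_inverse:
  fixes n :: real
  assumes "0 < n"
  shows "ln (1 + 1/n) = ln (n + 1) - ln n"
proof -
  have "1 + 1/n = (n + 1) / n"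
    using assms by (simp add: field_simps)
  then show ?thesis
    using assms by (simp add: ln_div)
qed

lemma ln_plus_one_diff_ge:
  fixes n :: real
  assumes "0 < n"
  shows "1 \<le> (n + 1/2) * (ln (n + 1) - ln n)"
proof -
  have "ln (n + 1) - ln n = ln (1 + 1/n)"
    using assms by (simp add: ln_one_plus_inverse)
  also have "2 / (2*n + 1) \<le> \<dots>"
    using ln_one_plus_ge_pade[of "1/n"] assms by (simp add: field_simps)
  finally have "(n + 1/2) * (2 / (2*n + 1)) \<le> (n + 1/2) * (ln (n + 1) - ln n)"
    using assms by (intro mult_left_mono) auto
  then show ?thesis
    using assms by (simp add: field_simps)
qed

lemma ln_plus_one_diff_le:
  fixes n :: real
  assumes "1 \<le> n"
  shows "(n + 1/2) * (ln (n + 1) - ln n) \<le> 1 + 1/(2*n) - 1/(2*(n + 1))"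
proof -
  have "ln (n + 1) - ln n = ln (1 + 1/n)"
    using assms by (simp add: ln_one_plus_inverse)
  also have "\<dots> \<le> 1/n - (1/n)^2/2 + (1/n)^3/3"
    using assms by (intro ln_one_plus_le_cubic) simp
  finally have "(n + 1/2) * (ln (n + 1) - ln n) \<le> (n + 1/2) * (1/n - (1/n)^2/2 + (1/n)^3/3)"
    using assms by (intro mult_left_mono) auto
  also have "\<dots> = 1 + 1/(2*n) - 1/(2*(n + 1)) - (5*n + 2) * (n - 1) / (12*n^3*(n + 1))"
    using assms by (simp add: divide_simps power2_eq_square power3_eq_cube) (simp add: algebra_simps)
  also have "\<dots> \<le> 1 + 1/(2*n) - 1/(2*(n + 1))"
    using assms by (simp add: zero_le_mult_iff)
  finally show ?thesis .
qed

lemma ln_fact_le: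
  assumes "0 < n"
  shows "ln (fact n) \<le> 1 + (real n + 1/2) * ln (real n) - real n"
  using assms
proof (induction n rule: nat_induct_non_zero)
  case (Suc n)
  have "ln (fact (Suc n) :: real) = ln (real n + 1) + ln (fact n)"
    by (simp add: ln_mult add.commute)
  then show ?case
    using Suc.IH ln_plus_one_diff_ge[of "real n"] Suc.hyps by (simp add: algebra_simps)
qed simp

lemma ln_fact_ge:
  assumes "0 < n"
  shows "(real n + 1/2) * ln (real n) - real n + 1/2 + 1/(2 * real n) \<le> ln (fact n)"
  using assms
proof (induction n rule: nat_induct_non_zero)
  case (Suc n)
  have "ln (fact (Suc n) :: real) = ln (real n + 1) + ln (fact n)"
    by (simp add: ln_mult add.commute)
  then show ?case
    using Suc.IH ln_plus_one_diff_le[of "real n"] Suc.hyps by (simp add: algebra_simps)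
qed simp

definition poisson_mass :: "real \<Rightarrow> nat \<Rightarrow> real" where
  "poisson_mass a m = a ^ m * exp (- a) / fact m"

lemma poisson_mass_pos: "0 < a \<Longrightarrow> 0 < poisson_mass a m"
  by (simp add: poisson_mass_def)

lemma poisson_mass_Suc: "poisson_mass a (Suc m) = poisson_mass a m * a / real (Suc m)"
  by (simp add: poisson_mass_def field_simps)

lemma poisson_mass_sums: "poisson_mass a sums 1"
proof -
  have "(\<lambda>m. a ^ m / fact m) sums exp a"
    using exp_converges[of a] by (simp add: divide_inverse_commute)
  then have "(\<lambda>m. a ^ m / fact m * exp (- a)) sums (exp a * exp (- a))"
    by (rule sums_mult2)
  then show ?thesis
    by (simp add: poisson_mass_def[abs_def] exp_minus_inverse)
qed

lemma poisson_mass_eq_exp: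
  assumes "0 < a"
  shows "poisson_mass a m = exp (real m * ln a - a - ln (fact m))"
proof -
  have "exp (real m * ln a - a - ln (fact m)) = exp (real m * ln a) * exp (- a) / fact m"
    by (simp add: exp_diff exp_minus divide_inverse)
  then show ?thesis
    using assms by (simp add: poisson_mass_def exp_of_nat_mult)
qed

lemma poisson_mass_mono_below_mean:
  assumes "j \<le> n" "real n \<le> a"
  shows "poisson_mass a j \<le> poisson_mass a n"
  using assms
proof (induction n arbitrary: j)
  case (Suc n)
  have "poisson_mass a n \<le> poisson_mass a n * (a / real (Suc n))"
    using Suc.prems poisson_mass_pos[of a n] by (intro mult_le_cancel_left1[THEN iffD2]) auto
  then have step: "poisson_mass a n \<le> poisson_mass a (Suc n)"
    by (simp add: poisson_mass_Suc)
  show ?case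
  proof (cases "j = Suc n")
    case False
    then have "poisson_mass a j \<le> poisson_mass a n"
      using Suc by simp
    then show ?thesis
      using step by linarith
  qed simp
qed simp

lemma poisson_mass_le_inverse_sqrt:
  assumes a: "0 < a" and m: "0 < m"
  shows "poisson_mass a m \<le> 1 / sqrt (real m)"
proof -
  have "ln (a / real m) \<le> a / real m - 1"
    using a m by (intro ln_le_minus_one) simp
  then have "real m * (ln a - ln (real m)) \<le> real m * (a / real m - 1)"
    using a m by (intro mult_left_mono) (simp_all add: ln_div)
  also have "\<dots> = a - real m"
    using m by (simp add: field_simps)
  moreover have "(real m + 1/2) * ln (real m) - real m \<le> ln (fact m)"
    using ln_fact_ge[OF m] divide_nonneg_nonneg[of 1 "2 * real m"] by linarith
  ultimately have "real m * ln a - a - ln (fact m) \<le> - ln (real m) / 2"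
    by (simp add: algebra_simps)
  then have "poisson_mass a m \<le> exp (- ln (real m) / 2)"
    by (simp add: poisson_mass_eq_exp[OF a])
  also have "\<dots> = 1 / sqrt (real m)"
    using m by (simp add: exp_minus ln_sqrt[symmetric] inverse_eq_divide)
  finally show ?thesis .
qed

lemma poisson_mass_le:
  assumes a: "0 < a"
  shows "poisson_mass a m \<le> sqrt 2 / sqrt a"
proof -
  have bound: "poisson_mass a n \<le> sqrt 2 / sqrt a" if "0 < n" "a \<le> 2 * real n" for n
  proof -
    have "sqrt a \<le> sqrt 2 * sqrt (real n)"
      using that by (simp add: real_sqrt_mult[symmetric])
    then have "1 / sqrt (real n) \<le> sqrt 2 / sqrt a"
      using that a by (simp add: field_simps)
    then show ?thesis
      using poisson_mass_le_inverse_sqrt[OF a \<open>0 < n\<close>] by linarith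
  qed
  consider "0 < m" "a \<le> 2 * real m" | "a < 2" "m = 0" | "2 \<le> a" "2 * real m < a"
    by linarith
  then show ?thesis
  proof cases
    case 1
    then show ?thesis by (rule bound)
  next
    case 2
    have "poisson_mass a m \<le> 1"
      using 2 a by (simp add: poisson_mass_def)
    also have "1 \<le> sqrt 2 / sqrt a"
      using 2 a by (simp add: field_simps)
    finally show ?thesis .
  next
    case 3
    define n where "n = nat \<lceil>a/2\<rceil>"
    have n: "a \<le> 2 * real n" "real n \<le> a" "0 < n"
      using 3 unfolding n_def by linarith+
    have "m \<le> n"
      using 3 n by linarith
    then have "poisson_mass a m \<le> poisson_mass a n"
      using n by (intro poisson_mass_mono_below_mean)
    also have "\<dots> \<le> sqrt 2 / sqrt a"
      using n by (intro bound)
    finally show ?thesis .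
  qed
qed

lemma poisson_mass_floor_ge:
  assumes a: "0 < a"
  shows "exp (-2) / sqrt (a + 1) \<le> poisson_mass a (nat \<lfloor>a\<rfloor>)"
proof (cases "a < 1")
  case True
  have "exp (-2) / sqrt (a + 1) \<le> exp (-2)"
    using a by (simp add: divide_le_eq)
  also have "\<dots> \<le> exp (- a)"
    using True by simp
  finally have "exp (-2) / sqrt (a + 1) \<le> exp (- a)" .
  then show ?thesis
    using True a by (simp add: poisson_mass_def)
next
  case False
  define n where "n = nat \<lfloor>a\<rfloor>"
  have n: "0 < n" "real n \<le> a" "a < real n + 1"
    using False unfolding n_def by linarith+
  have "real n * ln (real n) \<le> real n * ln a" "ln (real n) \<le> ln (a + 1)"
    using n by (auto intro: mult_left_mono)
  moreover have "ln (fact n) \<le> 1 + real n * ln (real n) + ln (real n) / 2 - real n"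
    using ln_fact_le[OF \<open>0 < n\<close>] by (simp add: algebra_simps)
  ultimately have "-2 - ln (a + 1) / 2 \<le> real n * ln a - a - ln (fact n)"
    using n by linarith
  then have "exp (-2 - ln (a + 1) / 2) \<le> poisson_mass a n"
    by (simp add: poisson_mass_eq_exp[OF a])
  moreover have "exp (-2 - ln (a + 1) / 2) = exp (-2) / sqrt (a + 1)"
    using a by (simp add: exp_diff ln_sqrt[symmetric])
  ultimately show ?thesis
    unfolding n_def by simp
qed

text \<open>Literally the summand of A_coef and B_coef, so that both unfold to bessel_I.\<close>

definition bessel_I_term :: "nat \<Rightarrow> real \<Rightarrow> nat \<Rightarrow> real" where
  "bessel_I_term v lam k =
     lam ^ (v + 2*k) / (2 ^ (v + 2*k) * fact (v + 2*k)) * real ((v + 2*k) choose k)"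

definition bessel_I :: "nat \<Rightarrow> real \<Rightarrow> real" where
  "bessel_I v lam = suminf (bessel_I_term v lam)"

lemma bessel_I_term_eq:
  "bessel_I_term v lam k = (lam/2) ^ (v + 2*k) / (fact k * fact (v + k))"
proof -
  have "fact k * fact (v + 2*k - k) * ((v + 2*k) choose k) = (fact (v + 2*k) :: nat)"
    by (rule binomial_fact_lemma) simp
  moreover have "v + 2*k - k = v + k"
    by simp
  ultimately have "real (fact k * fact (v + k) * ((v + 2*k) choose k)) = real (fact (v + 2*k))"
    by (simp only:)
  then have fact_eq: "fact (v + 2*k) = fact k * fact (v + k) * (real ((v + 2*k) choose k))"
    by (simp only: of_nat_mult of_nat_fact)
  have "real ((v + 2*k) choose k) \<noteq> 0"
    by simp
  then show ?thesis
    unfolding bessel_I_term_def fact_eq by (simp add: power_divide)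
qed

lemma power_over_facts_eq_poisson_product:
  fixes a b c :: real
  assumes "a \<noteq> 0" "a * b = c^2"
  shows "c ^ (v + 2*k) / (fact k * fact (v + k))
           = exp (a + b) * (c/a) ^ v * (poisson_mass a (v + k) * poisson_mass b k)"
proof -
  have "exp (a + b) * (c/a) ^ v * (poisson_mass a (v + k) * poisson_mass b k)
          = (c/a) ^ v * a ^ v * (a * b) ^ k / (fact k * fact (v + k))"
  proof -
    have "exp (a + b) * (exp (- a) * exp (- b)) = 1"
      by (simp flip: exp_add)
    then show ?thesis
      unfolding poisson_mass_def power_add power_mult_distrib by (simp add: field_simps)
  qed
  also have "\<dots> = c ^ (v + 2*k) / (fact k * fact (v + k))"
  proof -
    have "(c/a) ^ v * a ^ v = c ^ v"
      using assms(1) by (simp add: power_divide)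
    then show ?thesis
      by (simp add: assms(2) power_add power_mult)
  qed
  finally show ?thesis
    by (rule sym)
qed

locale bessel_poisson =
  fixes v :: nat and lam :: real
  assumes lam_pos: "0 < lam"
begin

definition s :: real where "s = sqrt (real v ^ 2 + lam ^ 2)"
definition a :: real where "a = (s + real v) / 2"
definition b :: real where "b = (s - real v) / 2"

lemma s_squared: "s^2 = real v ^ 2 + lam ^ 2"
  by (simp add: s_def)

lemma v_less_s: "real v < s"
  unfolding s_def using lam_pos by (intro real_less_rsqrt) simp

lemma lam_le_s: "lam \<le> s"
  unfolding s_def by (intro real_le_rsqrt) simp

lemma s_le_v_plus_lam: "s \<le> real v + lam"
  unfolding s_def using lam_pos by (intro real_le_lsqrt) (simp_all add: power2_eq_square algebra_simps)

lemma a_pos: "0 < a" and b_pos: "0 < b"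
  using v_less_s by (auto simp: a_def b_def)

lemma a_eq_b_plus_v: "a = b + real v"
  by (simp add: a_def b_def field_simps)

lemma a_times_b: "a * b = (lam/2)^2"
  using s_squared by (simp add: a_def b_def power2_eq_square algebra_simps)

lemma exp_Psi_eq: "exp (Psi v lam) = exp (a + b) * ((lam/2)/a) ^ v"
proof -
  have "(s - real v) / lam = (lam/2) / a"
    using a_times_b a_pos lam_pos by (simp add: b_def field_simps power2_eq_square)
  moreover have "a + b = s"
    by (simp add: a_def b_def field_simps)
  ultimately have "Psi v lam = a + b + real v * ln ((lam/2) / a)"
    by (simp add: Psi_def s_def)
  then show ?thesis
    using a_pos lam_pos by (simp add: exp_add exp_of_nat_mult)
qed

lemma bessel_I_term_eq_poisson_product:
  "bessel_I_term v lam k = exp (Psi v lam) * (poisson_mass a (v + k) * poisson_mass b k)"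
  unfolding bessel_I_term_eq exp_Psi_eq
  by (rule power_over_facts_eq_poisson_product[OF _ a_times_b]) (use a_pos in simp)

lemma poisson_mass_a_le: "poisson_mass a m \<le> 2 / sqrt lam"
proof -
  have "sqrt 2 / sqrt a = sqrt (2 / a)" and "2 / sqrt lam = sqrt (4 / lam)"
    by (simp_all add: real_sqrt_divide)
  moreover have "2 / a \<le> 4 / lam"
    using lam_le_s a_pos lam_pos by (simp add: a_def field_simps)
  ultimately have "sqrt 2 / sqrt a \<le> 2 / sqrt lam"
    by simp
  then show ?thesis
    using poisson_mass_le[OF a_pos, of m] by linarith
qed

lemma bessel_I_term_nonneg: "0 \<le> bessel_I_term v lam k"
  using poisson_mass_pos[OF a_pos] poisson_mass_pos[OF b_pos]
  unfolding bessel_I_term_eq_poisson_product by (intro mult_nonneg_nonneg) (auto intro: less_imp_le)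

lemma bessel_I_term_le: "bessel_I_term v lam k \<le> exp (Psi v lam) * (2 / sqrt lam) * poisson_mass b k"
  unfolding bessel_I_term_eq_poisson_product mult.assoc
  using poisson_mass_a_le poisson_mass_pos[OF b_pos]
  by (intro mult_left_mono mult_right_mono) (auto simp: less_imp_le)

lemma summable_bessel_I_term: "summable (bessel_I_term v lam)"
proof (rule summable_comparison_test')
  show "summable (\<lambda>k. exp (Psi v lam) * (2 / sqrt lam) * poisson_mass b k)"
    by (rule summable_mult[OF sums_summable[OF poisson_mass_sums]])
  show "norm (bessel_I_term v lam k) \<le> exp (Psi v lam) * (2 / sqrt lam) * poisson_mass b k" for k
    using bessel_I_term_nonneg bessel_I_term_le by simp
qed

lemma bessel_I_nonneg: "0 \<le> bessel_I v lam"
  unfolding bessel_I_def using summable_bessel_I_term bessel_I_term_nonneg by (rule suminf_nonneg)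

lemma bessel_I_le: "bessel_I v lam \<le> 2 / sqrt lam * exp (Psi v lam)"
proof -
  have "(\<lambda>k. exp (Psi v lam) * (2 / sqrt lam) * poisson_mass b k) sums (exp (Psi v lam) * (2 / sqrt lam) * 1)"
    by (intro sums_mult poisson_mass_sums)
  then show ?thesis
    unfolding bessel_I_def
    using sums_le[OF bessel_I_term_le summable_sums[OF summable_bessel_I_term]]
    by (simp add: mult.commute)
qed

lemma bessel_I_ge_floor_term:
  "exp (-2) / sqrt (a + 1) * (exp (-2) / sqrt (b + 1)) * exp (Psi v lam) \<le> bessel_I v lam"
proof -
  define k where "k = nat \<lfloor>b\<rfloor>"
  have "v + k = nat \<lfloor>a\<rfloor>"
    using b_pos by (simp add: k_def a_eq_b_plus_v nat_add_distrib)
  then have "exp (-2) / sqrt (a + 1) * (exp (-2) / sqrt (b + 1)) \<le> poisson_mass a (v + k) * poisson_mass b k"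
    using poisson_mass_floor_ge[OF a_pos] poisson_mass_floor_ge[OF b_pos] a_pos b_pos by (intro mult_mono) (auto simp: k_def less_imp_le poisson_mass_pos)
  then have "exp (-2) / sqrt (a + 1) * (exp (-2) / sqrt (b + 1)) * exp (Psi v lam)
      \<le> poisson_mass a (v + k) * poisson_mass b k * exp (Psi v lam)"
    by (rule mult_right_mono) simp
  also have "\<dots> = bessel_I_term v lam k"
    by (simp add: bessel_I_term_eq_poisson_product)
  also have "\<dots> \<le> bessel_I v lam"
    unfolding bessel_I_def
    using sum_le_suminf[OF summable_bessel_I_term, of "{k}"] bessel_I_term_nonneg by simp
  finally show ?thesis .
qed

lemma bessel_I_ge:
  assumes "1/2 \<le> lam"
  shows "exp (-4) / (3 * (real v + lam)) * exp (Psi v lam) \<le> bessel_I v lam"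
proof -
  have "0 \<le> real v"
    by simp
  then have "a + 1 \<le> 3 * (real v + lam)"
    using s_le_v_plus_lam assms unfolding a_def by argo
  moreover have "b + 1 \<le> 3 * (real v + lam)"
    using \<open>0 \<le> real v\<close> s_le_v_plus_lam assms unfolding b_def by argo
  ultimately have "(a + 1) * (b + 1) \<le> (3 * (real v + lam))^2"
    using a_pos b_pos by (simp add: power2_eq_square mult_mono)
  then have "sqrt ((a + 1) * (b + 1)) \<le> 3 * (real v + lam)"
    using assms by (intro real_le_lsqrt) simp_all
  then have "exp (-4) / (3 * (real v + lam)) \<le> exp (-2) / sqrt (a + 1) * (exp (-2) / sqrt (b + 1))"
    using a_pos b_pos by (simp add: frac_le real_sqrt_mult flip: exp_add)
  then show ?thesis
    using bessel_I_ge_floor_term by (meson exp_ge_zero mult_right_mono order_trans)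
qed

end

lemma bessel_I_bounds:
  assumes lam: "1/2 \<le> lam"
  shows "exp (-4) / 3 * (real v + lam) powr (-1) * exp (Psi v lam) \<le> 2 * bessel_I v lam"
    and "2 * bessel_I v lam \<le> 16 * lam powr (-1/2) * exp (Psi v lam)"
    and "2 * bessel_I v lam \<le> 16 * (real v + lam) * exp (Psi v lam)"
proof -
  interpret bessel_poisson v lam
    using lam by unfold_locales simp
  show "exp (-4) / 3 * (real v + lam) powr (-1) * exp (Psi v lam) \<le> 2 * bessel_I v lam"
    using bessel_I_ge[OF lam] bessel_I_nonneg lam by (simp add: powr_minus_divide)
  have upper: "2 * bessel_I v lam \<le> 4 * (1 / sqrt lam) * exp (Psi v lam)"
    using bessel_I_le by simp
  have "lam powr (-1/2) = 1 / sqrt lam"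
    using lam by (simp add: powr_minus_divide powr_half_sqrt)
  moreover have "4 * (1 / sqrt lam) * exp (Psi v lam) \<le> 16 * (1 / sqrt lam) * exp (Psi v lam)"
    using lam by (intro mult_right_mono) auto
  ultimately show "2 * bessel_I v lam \<le> 16 * lam powr (-1/2) * exp (Psi v lam)"
    using upper by simp
  have "1 / sqrt lam \<le> 2"
    using lam real_le_rsqrt[of "1/2" lam] by (simp add: field_simps)
  then have "4 * (1 / sqrt lam) \<le> 16 * (real v + lam)"
    using lam of_nat_0_le_iff[of v, where 'a = real] by argo
  then have "4 * (1 / sqrt lam) * exp (Psi v lam) \<le> 16 * (real v + lam) * exp (Psi v lam)"
    by (rule mult_right_mono) simp
  then show "2 * bessel_I v lam \<le> 16 * (real v + lam) * exp (Psi v lam)"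
    using upper by linarith
qed

lemma A_coef_B_coef_bounds:
  assumes lam: "1/2 \<le> lam"
  shows "exp (-4) / 3 * (real v + lam) powr (-1) * exp (Psi v lam - lam) \<le> (-1) ^ v * A_coef v lam"
    and "(-1) ^ v * A_coef v lam \<le> 16 * lam powr (-1/2) * exp (Psi v lam - lam)"
    and "(-1) ^ v * A_coef v lam \<le> 16 * (real v + lam) * exp (Psi v lam - lam)"
    and "exp (-4) / 3 * (real v + lam) powr (-1) * exp (Psi v lam + lam) \<le> B_coef v lam"
    and "B_coef v lam \<le> 16 * (real v + lam) * exp (Psi v lam + lam)"
proof -
  have A: "(-1) ^ v * A_coef v lam = exp (- lam) * (2 * bessel_I v lam)"
    and B: "B_coef v lam = exp lam * (2 * bessel_I v lam)"
    by (simp_all add: A_coef_def B_coef_def bessel_I_def bessel_I_term_def[abs_def])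
  have E: "exp (Psi v lam - lam) = exp (- lam) * exp (Psi v lam)"
    "exp (Psi v lam + lam) = exp lam * exp (Psi v lam)"
    by (simp_all add: exp_add[symmetric] add.commute)
  have scale: "exp t * x \<le> exp t * y" if "x \<le> y" for t x y :: real
    using that by simp
  note bounds = bessel_I_bounds[OF lam, of v, THEN scale[of _ _ "- lam"]]
    bessel_I_bounds[OF lam, of v, THEN scale[of _ _ lam]]
  show "exp (-4) / 3 * (real v + lam) powr (-1) * exp (Psi v lam - lam) \<le> (-1) ^ v * A_coef v lam"
    "(-1) ^ v * A_coef v lam \<le> 16 * lam powr (-1/2) * exp (Psi v lam - lam)"
    "(-1) ^ v * A_coef v lam \<le> 16 * (real v + lam) * exp (Psi v lam - lam)"
    "exp (-4) / 3 * (real v + lam) powr (-1) * exp (Psi v lam + lam) \<le> B_coef v lam"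
    "B_coef v lam \<le> 16 * (real v + lam) * exp (Psi v lam + lam)"
    unfolding A B E using bounds by (simp_all add: mult_ac)
qed

theorem proposition4p1:
  shows "\<exists>C c :: real. C > 0 \<and> c > 0 \<and>
    (\<forall>(v::nat) (lam::real). lam \<ge> 1/2 \<longrightarrow>
      (c * (real v + lam) powr (-1) * exp (Psi v lam - lam) \<le> (-1) ^ v * A_coef v lam \<and>
       (-1) ^ v * A_coef v lam \<le> C * (real v + lam) * exp (Psi v lam - lam) \<and>
       c * (real v + lam) powr (-1) * exp (Psi v lam + lam) \<le> B_coef v lam \<and>
       B_coef v lam \<le> C * (real v + lam) * exp (Psi v lam + lam)) \<and>
      (real v \<le> lam \<longrightarrow>
       c * (real v + lam) powr (-1) * exp (Psi v lam - lam) \<le> (-1) ^ v * A_coef v lam \<and>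
       (-1) ^ v * A_coef v lam \<le> C * lam powr (-1/2) * exp (Psi v lam - lam)))"
  using A_coef_B_coef_bounds
  by (intro exI[of _ 16] exI[of _ "exp (-4) / 3"] conjI allI impI) auto

end
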